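(* There exist a tree $\Gamma$ as described, coefficients $\lambda_x>0$, $\beta_x\in\mathbb R$ ($x\in\Gamma$), and a real number $t$ such that the only function $v:\Gamma\to\mathbb C$ satisfying $(Jv)(x)=tv(x)$ for all $x\in\Gamma$ is $v\equiv0$.
   Context: A tree $\Gamma$ "as described" is an infinite connected tree whose vertices are arranged in levels $\ell(x)\in\{0,1,2,\dots\}$: every vertex $x$ is adjacent to exactly one vertex $x'$ with $\ell(x')=\ell(x)+1$; for $\ell(x)\ge 1$ the set $N_x=\{y:\ y'=x\}$ of neighbours of $x$ on level $\ell(x)-1$ is finite and nonempty; $N_x=\emptyset$ if $\ell(x)=0$; there are no other edges. Given $\lambda_x>0$, $\beta_x\in\mathbb R$, the Jacobi matrix $J$ acts on functions $v:\Gamma\to\mathbb C$ by $(Jv)(x)=\lambda_x v(x')+\beta_x v(x)+\sum_{y\in N_x}\lambda_y v(y)$. *)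

theory Defs
  imports Complex_Main
begin

text \<open>A tree as described, with vertex set UNIV :: nat (any such tree is countably
infinite, since it is infinite, connected and locally finite). lev gives the level,
par x is the unique neighbour x' on the next level.\<close>

definition children :: "(nat \<Rightarrow> nat) \<Rightarrow> nat \<Rightarrow> nat set" where
  "children par x = {y. par y = x}"

definition tree_edges :: "(nat \<Rightarrow> nat) \<Rightarrow> (nat \<times> nat) set" where
  "tree_edges par = {(x, par x) | x. True} \<union> {(par x, x) | x. True}"

definition tree_as_described :: "(nat \<Rightarrow> nat) \<Rightarrow> (nat \<Rightarrow> nat) \<Rightarrow> bool" where
  "tree_as_described lev par \<longleftrightarrow>
     (\<forall>x. lev (par x) = lev x + 1) \<and>
     (\<forall>x. lev x \<ge> 1 \<longrightarrow> finite (children par x) \<and> children par x \<noteq> {}) \<and>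
     (\<forall>x. lev x = 0 \<longrightarrow> children par x = {}) \<and>
     (\<forall>x y. (x, y) \<in> (tree_edges par)\<^sup>*)"

definition jacobi :: "(nat \<Rightarrow> nat) \<Rightarrow> (nat \<Rightarrow> real) \<Rightarrow> (nat \<Rightarrow> real) \<Rightarrow> (nat \<Rightarrow> complex) \<Rightarrow> nat \<Rightarrow> complex" where
  "jacobi par lam beta v x =
     of_real (lam x) * v (par x) + of_real (beta x) * v x
     + (\<Sum>y\<in>children par x. of_real (lam y) * v y)"

end

theory Submission
  imports Defs "HOL-Library.Nat_Bijection"
begin

text \<open>The tree is a comb: a spine \<open>s\<^sub>0, s\<^sub>1, \<dots>\<close> with \<open>s\<^sub>k\<close> on level \<open>k\<close>, and at every
  \<open>s\<^sub>m\<close> with \<open>m \<ge> 1\<close> a tooth, a path of \<open>m\<close> vertices descending to level 0. All weights are 1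
  and \<open>t = 0\<close>. On a tooth \<open>\<beta> = -2\<close>, so the eigenvalue equation makes \<open>v\<close> grow linearly
  from the leaf; \<open>\<beta> = -(m-1)/m\<close> at the top of the tooth at \<open>s\<^sub>m\<close> is tuned so that this
  forces \<open>v(s\<^sub>m) = 0\<close>. With \<open>\<beta>(s\<^sub>0) = 1\<close> the equation at \<open>s\<^sub>0\<close> then gives \<open>v(s\<^sub>0) = 0\<close>,
  the equations along the spine give \<open>v = 0\<close> at the top of every tooth, and linearity
  gives \<open>v = 0\<close> on the whole tooth.\<close>

lemma linear_if_discrete_harmonic:
  fixes w :: "nat \<Rightarrow> nat \<Rightarrow> 'a :: comm_ring_1"
  assumes start: "\<And>a. w a 1 = 2 * w (Suc a) 0"
    and step: "\<And>a b. w a (b + 2) = 2 * w (Suc a) (b + 1) - w (Suc (Suc a)) b"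
  shows "w a b = of_nat (b + 1) * w (a + b) 0"
proof -
  have "w a b = of_nat (b + 1) * w (a + b) 0 \<and>
        w a (Suc b) = of_nat (b + 2) * w (a + Suc b) 0" for a
  proof (induction b arbitrary: a)
    case 0
    show ?case using start[of a] by simp
  next
    case (Suc b)
    have "w a (b + 2) = 2 * w (Suc a) (b + 1) - w (Suc (Suc a)) b"
      by (rule step)
    also have "\<dots> = of_nat (b + 3) * w (a + b + 2) 0"
      using Suc.IH[of "Suc a"] Suc.IH[of "Suc (Suc a)"] by (simp add: algebra_simps)
    finally show ?case using Suc.IH[of a] by (simp add: algebra_simps numeral_eq_Suc)
  qed
  then show ?thesis by blast
qed

text \<open>\<open>branch a b\<close> is the vertex on level \<open>b\<close> of the tooth hanging from \<open>spine (a + b + 1)\<close>,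
  \<open>a + 1\<close> steps below it.\<close>

definition spine :: "nat \<Rightarrow> nat" where
  "spine k = sum_encode (Inl k)"

definition branch :: "nat \<Rightarrow> nat \<Rightarrow> nat" where
  "branch a b = sum_encode (Inr (prod_encode (a, b)))"

lemma spine_inject [simp]: "spine k = spine l \<longleftrightarrow> k = l"
  by (simp add: spine_def sum_encode_eq)

lemma branch_inject [simp]: "branch a b = branch c d \<longleftrightarrow> a = c \<and> b = d"
  by (simp add: branch_def sum_encode_eq)

lemma spine_neq_branch [simp]: "spine k \<noteq> branch a b" "branch a b \<noteq> spine k"
  by (simp_all add: spine_def branch_def sum_encode_eq)

lemma comb_vertex_cases:
  obtains k where "x = spine k" | a b where "x = branch a b"
proof (cases "sum_decode x")
  case (Inl k)
  then have "x = spine k"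
    by (metis sum_decode_inverse spine_def)
  then show ?thesis by (rule that(1))
next
  case (Inr n)
  obtain a b where "prod_decode n = (a, b)"
    by fastforce
  with Inr have "x = branch a b"
    by (metis sum_decode_inverse prod_decode_inverse branch_def)
  then show ?thesis by (rule that(2))
qed

definition comb_par :: "nat \<Rightarrow> nat" where
  "comb_par x = (case sum_decode x of
     Inl k \<Rightarrow> spine (Suc k)
   | Inr n \<Rightarrow> (case prod_decode n of (0, b) \<Rightarrow> spine (Suc b) | (Suc a, b) \<Rightarrow> branch a (Suc b)))"

definition comb_lev :: "nat \<Rightarrow> nat" where
  "comb_lev x = (case sum_decode x of Inl k \<Rightarrow> k | Inr n \<Rightarrow> snd (prod_decode n))"

definition comb_beta :: "nat \<Rightarrow> real" where
  "comb_beta x = (case sum_decode x of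
     Inl k \<Rightarrow> (if k = 0 then 1 else 0)
   | Inr n \<Rightarrow> (case prod_decode n of (0, b) \<Rightarrow> - (b / (b + 1)) | _ \<Rightarrow> -2))"

lemma comb_par_simps [simp]:
  "comb_par (spine k) = spine (Suc k)"
  "comb_par (branch 0 b) = spine (Suc b)"
  "comb_par (branch (Suc a) b) = branch a (Suc b)"
  by (simp_all add: comb_par_def spine_def branch_def)

lemma comb_lev_simps [simp]:
  "comb_lev (spine k) = k"
  "comb_lev (branch a b) = b"
  by (simp_all add: comb_lev_def spine_def branch_def)

lemma comb_beta_simps [simp]:
  "comb_beta (spine 0) = 1"
  "comb_beta (spine (Suc k)) = 0"
  "comb_beta (branch 0 b) = - (b / (b + 1))"
  "comb_beta (branch (Suc a) b) = -2"
  by (simp_all add: comb_beta_def spine_def branch_def)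

lemma children_comb_simps [simp]:
  "children comb_par (spine 0) = {}"
  "children comb_par (spine (Suc k)) = {spine k, branch 0 k}"
  "children comb_par (branch a 0) = {}"
  "children comb_par (branch a (Suc b)) = {branch (Suc a) b}"
proof -
  have par_branch: "comb_par (branch c d) = (case c of 0 \<Rightarrow> spine (Suc d) | Suc c' \<Rightarrow> branch c' (Suc d))"
    for c d by (cases c) simp_all
  have "comb_par y \<noteq> spine 0"
    and "comb_par y = spine (Suc k) \<longleftrightarrow> y = spine k \<or> y = branch 0 k"
    and "comb_par y \<noteq> branch a 0"
    and "comb_par y = branch a (Suc b) \<longleftrightarrow> y = branch (Suc a) b" for y
    by (cases y rule: comb_vertex_cases; auto simp: par_branch split: nat.splits)+
  then show "children comb_par (spine 0) = {}" "children comb_par (spine (Suc k)) = {spine k, branch 0 k}"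
    "children comb_par (branch a 0) = {}" "children comb_par (branch a (Suc b)) = {branch (Suc a) b}"
    by (auto simp: children_def)
qed

lemma tree_edges_connected_if_reach_root:
  assumes "\<And>x. (x, r) \<in> (tree_edges par)\<^sup>*"
  shows "(x, y) \<in> (tree_edges par)\<^sup>*"
proof -
  have "sym (tree_edges par)"
    by (auto simp: sym_def tree_edges_def)
  then have "(r, y) \<in> (tree_edges par)\<^sup>*"
    using assms[of y] by (metis symD sym_rtrancl)
  then show ?thesis
    using assms[of x] by (rule rtrancl_trans[rotated])
qed

lemma spine_reaches_root: "(spine k, spine 0) \<in> (tree_edges comb_par)\<^sup>*"
proof (induction k)
  case (Suc k)
  have "(spine (Suc k), spine k) \<in> tree_edges comb_par"
    unfolding tree_edges_def by (auto intro: exI[of _ "spine k"])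
  with Suc.IH show ?case
    by (meson converse_rtrancl_into_rtrancl)
qed simp

lemma branch_reaches_spine: "(branch a b, spine (a + b + 1)) \<in> (tree_edges comb_par)\<^sup>*"
proof (induction a arbitrary: b)
  case 0
  have "(branch 0 b, spine (Suc b)) \<in> tree_edges comb_par"
    unfolding tree_edges_def by (auto intro: exI[of _ "branch 0 b"])
  then show ?case by simp
next
  case (Suc a)
  have "(branch (Suc a) b, branch a (Suc b)) \<in> tree_edges comb_par"
    unfolding tree_edges_def by (auto intro: exI[of _ "branch (Suc a) b"])
  with Suc.IH[of "Suc b"] show ?case
    by (simp add: converse_rtrancl_into_rtrancl)
qed

lemma tree_as_described_comb: "tree_as_described comb_lev comb_par"
proof -
  have "(x, spine 0) \<in> (tree_edges comb_par)\<^sup>*" for x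
  proof (cases x rule: comb_vertex_cases)
    case (2 a b)
    then show ?thesis
      using branch_reaches_spine spine_reaches_root by (metis rtrancl_trans)
  qed (simp add: spine_reaches_root)
  then have "(x, y) \<in> (tree_edges comb_par)\<^sup>*" for x y
    by (rule tree_edges_connected_if_reach_root)
  moreover have "comb_lev (comb_par x) = comb_lev x + 1" for x
  proof (cases x rule: comb_vertex_cases)
    case (2 a b)
    then show ?thesis by (cases a) simp_all
  qed simp
  moreover have "finite (children comb_par x) \<and> (children comb_par x = {} \<longleftrightarrow> comb_lev x = 0)" for x
  proof (cases x rule: comb_vertex_cases)
    case (1 k)
    then show ?thesis by (cases k) simp_all
  next
    case (2 a b)
    then show ?thesis by (cases b) simp_all
  qed
  ultimately show ?thesis
    unfolding tree_as_described_def by auto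
qed

context
  fixes v :: "nat \<Rightarrow> complex"
  assumes kernel: "\<And>x. jacobi comb_par (\<lambda>_. 1) comb_beta v x = 0"
begin

lemma kernel_eq: "v (comb_par x) + of_real (comb_beta x) * v x + (\<Sum>y\<in>children comb_par x. v y) = 0"
  using kernel[of x] by (simp add: jacobi_def)

lemma kernel_branch_linear: "v (branch a b) = of_nat (b + 1) * v (branch (a + b) 0)"
proof (rule linear_if_discrete_harmonic[where w = "\<lambda>a b. v (branch a b)"])
  show "v (branch a 1) = 2 * v (branch (Suc a) 0)" for a
    using kernel_eq[of "branch (Suc a) 0"] by (simp add: algebra_simps)
  show "v (branch a (b + 2)) = 2 * v (branch (Suc a) (b + 1)) - v (branch (Suc (Suc a)) b)" for a b
    using kernel_eq[of "branch (Suc a) (Suc b)"] by (simp add: algebra_simps numeral_eq_Suc)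
qed

lemma kernel_spine_zero: "v (spine k) = 0"
proof -
  have succ: "v (spine (Suc b)) = 0" for b
  proof (cases b)
    case 0
    then show ?thesis using kernel_eq[of "branch 0 0"] by simp
  next
    case (Suc c)
    define leaf where "leaf = v (branch b 0)"
    have top: "v (branch 0 b) = of_nat (b + 1) * leaf" and below: "v (branch 1 c) = of_nat b * leaf"
      using kernel_branch_linear[of 0 b] kernel_branch_linear[of 1 c] Suc by (simp_all add: leaf_def)
    have coeff: "of_real (comb_beta (branch 0 b)) * of_nat (b + 1) = - (of_nat b :: complex)"
    proof -
      have "of_real (comb_beta (branch 0 b)) * of_nat (b + 1) = (of_real (- (b / (b + 1) * (b + 1))) :: complex)"
        by (simp only: comb_beta_simps of_real_mult of_real_minus mult_minus_left of_real_add
            of_real_1 of_real_of_nat_eq of_nat_add of_nat_1)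
      also have "real b / (b + 1) * (b + 1) = b"
        by simp
      finally show ?thesis by simp
    qed
    have "of_real (comb_beta (branch 0 b)) * v (branch 0 b) = (of_real (comb_beta (branch 0 b)) * of_nat (b + 1)) * leaf"
      by (simp only: top mult.assoc)
    also have "\<dots> = - v (branch 1 c)"
      by (simp only: coeff below mult_minus_left)
    finally show ?thesis
      using kernel_eq[of "branch 0 b"] Suc by simp
  qed
  moreover have "v (spine 0) = 0"
    using kernel_eq[of "spine 0"] succ[of 0] by simp
  ultimately show ?thesis by (cases k) simp_all
qed

lemma kernel_branch_top_zero: "v (branch 0 b) = 0"
  using kernel_eq[of "spine (Suc b)"] by (simp add: kernel_spine_zero)

lemma kernel_trivial: "v = (\<lambda>_. 0)"
proof
  fix x
  have leaf: "v (branch n 0) = 0" for n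
  proof -
    have "of_nat (Suc n) * v (branch n 0) = 0"
      using kernel_branch_linear[of 0 n] kernel_branch_top_zero[of n] by simp
    then show ?thesis
      using of_nat_neq_0[of n, where 'a = complex] by simp
  qed
  show "v x = 0"
  proof (cases x rule: comb_vertex_cases)
    case (2 a b)
    then show ?thesis
      using kernel_branch_linear[of a b] leaf[of "a + b"] by simp
  qed (simp add: kernel_spine_zero)
qed

end

theorem proposition5:
  shows "\<exists>(lev :: nat \<Rightarrow> nat) (par :: nat \<Rightarrow> nat) (lam :: nat \<Rightarrow> real) (beta :: nat \<Rightarrow> real) (t :: real).
           tree_as_described lev par \<and> (\<forall>x. lam x > 0) \<and>
           (\<forall>v :: nat \<Rightarrow> complex.
              (\<forall>x. jacobi par lam beta v x = of_real t * v x) \<longrightarrow> v = (\<lambda>_. 0))"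
  using tree_as_described_comb kernel_trivial
  by (intro exI[of _ comb_lev] exI[of _ comb_par] exI[of _ "\<lambda>_. 1"] exI[of _ comb_beta] exI[of _ 0]) simp

end
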